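(* Let $(E,\mathcal{E},\nu)$ be a $\sigma$-finite measure space, let $\phi$ be a Young function satisfying the $\Delta_2$-condition, let $w$ be a weight function, and let $\Psi:E\to E$ be a non-singular measurable transformation such that the composition operator $C_\Psi f=f\circ\Psi$ acts on the Orlicz-Lorentz space $L_{(\phi,w)}$. For an integer $m\ge 0$ let $f_{\Psi^m}=\frac{d(\nu\circ\Psi^{-m})}{d\nu}$ and $E_m=\{x\in E: f_{\Psi^m}(x)=0\}$. Then for every $m\ge 0$, $$\mathcal{N}(C_\Psi^m)=L_{(\phi,w)}(E_m),$$ i.e. the kernel of $C_\Psi^m$ consists exactly of those $f\in L_{(\phi,w)}$ with $f(x)=0$ for (almost every) $x\in E\setminus E_m$.
   Context: A Young function is a convex $\phi:[0,\infty)\to[0,\infty)$ with $\phi(x)=0\iff x=0$ and $\lim_{x\to\infty}\phi(x)=\infty$; it satisfies the $\Delta_2$-condition if $\phi(2x)\le k\phi(x)$ for some $k>0$ and all $x>0$. A weight function is a non-increasing locally integrable $w:(0,\infty)\to(0,\infty)$ with $\int_0^\infty w(t)\,dt=\infty$. For measurable $f:E\to\mathbb{C}$, $\nu_f(s)=\nu\{x:|f(x)|>s\}$ and $f^*(t)=\inf\{s>0:\nu_f(s)\le t\}$. The Orlicz-Lorentz space $L_{(\phi,w)}$ is the space of measurable $f$ with $\int_0^\infty\phi(\alpha f^*(t))w(t)\,dt<\infty$ for some $\alpha>0$, normed by $\|f\|=\inf\{\epsilon>0:\int_0^\infty\phi(f^*(t)/\epsilon)w(t)\,dt\le1\}$.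 $\Psi$ is non-singular if $\nu(\Psi^{-1}(S))=0$ whenever $\nu(S)=0$; then each $\Psi^m$ is non-singular and $\nu_m:=\nu\circ\Psi^{-m}$ is absolutely continuous with respect to $\nu$, with Radon–Nikodym derivative $f_{\Psi^m}$ ($\Psi^0$ is the identity). $C_\Psi^m f=f\circ\Psi^m$. For $A\in\mathcal{E}$, $L_{(\phi,w)}(A)$ denotes the set of $f\in L_{(\phi,w)}$ vanishing (a.e.) outside $A$. $\mathcal{N}(T)$ denotes the kernel of $T$. *)

theory Defs
  imports "HOL-Probability.Probability"
begin

definition young_function :: "(real \<Rightarrow> real) \<Rightarrow> bool" where
  "young_function \<phi> \<longleftrightarrow>
     convex_on {0..} \<phi> \<and> (\<forall>x\<ge>0. \<phi> x \<ge> 0) \<and>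
     (\<forall>x\<ge>0. \<phi> x = 0 \<longleftrightarrow> x = 0) \<and> filterlim \<phi> at_top at_top"

definition delta2 :: "(real \<Rightarrow> real) \<Rightarrow> bool" where
  "delta2 \<phi> \<longleftrightarrow> (\<exists>k>0. \<forall>x>0. \<phi> (2 * x) \<le> k * \<phi> x)"

definition weight_function :: "(real \<Rightarrow> real) \<Rightarrow> bool" where
  "weight_function w \<longleftrightarrow>
     (\<forall>s t. 0 < s \<longrightarrow> s \<le> t \<longrightarrow> w t \<le> w s) \<and> (\<forall>t>0. w t > 0) \<and>
     w \<in> borel_measurable lborel \<and>
     (\<forall>t>0. (\<integral>\<^sup>+ x\<in>{0<..t}. ennreal (w x) \<partial>lborel) < \<infinity>) \<and>
     (\<integral>\<^sup>+ x\<in>{0<..}. ennreal (w x) \<partial>lborel) = \<infinity>"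

definition distrib_fun :: "'a measure \<Rightarrow> ('a \<Rightarrow> complex) \<Rightarrow> real \<Rightarrow> ennreal" where
  "distrib_fun M f s = emeasure M {x \<in> space M. norm (f x) > s}"

text \<open>decreasing rearrangement \<open>f^*(t)\<close>, valued in \<open>[0,\<infinity>]\<close> (infimum of the empty set is \<infinity>)\<close>
definition decr_rearr :: "'a measure \<Rightarrow> ('a \<Rightarrow> complex) \<Rightarrow> real \<Rightarrow> ennreal" where
  "decr_rearr M f t = Inf {ennreal s | s. s > 0 \<and> distrib_fun M f s \<le> ennreal t}"

definition OL_modular :: "(real \<Rightarrow> real) \<Rightarrow> (real \<Rightarrow> real) \<Rightarrow> 'a measure \<Rightarrow> real \<Rightarrow> ('a \<Rightarrow> complex) \<Rightarrow> ennreal" where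
  "OL_modular \<phi> w M \<alpha> f =
     (\<integral>\<^sup>+ t\<in>{0<..}. (if decr_rearr M f t = \<infinity> then \<infinity>
                        else ennreal (\<phi> (\<alpha> * enn2real (decr_rearr M f t)) * w t)) \<partial>lborel)"

definition in_OL :: "(real \<Rightarrow> real) \<Rightarrow> (real \<Rightarrow> real) \<Rightarrow> 'a measure \<Rightarrow> ('a \<Rightarrow> complex) \<Rightarrow> bool" where
  "in_OL \<phi> w M f \<longleftrightarrow> f \<in> borel_measurable M \<and> (\<exists>\<alpha>>0. OL_modular \<phi> w M \<alpha> f < \<infinity>)"

definition nonsingular :: "'a measure \<Rightarrow> ('a \<Rightarrow> 'a) \<Rightarrow> bool" where
  "nonsingular M \<Psi> \<longleftrightarrow>
     (\<forall>S\<in>sets M. emeasure M S = 0 \<longrightarrow> emeasure M (\<Psi> -` S \<inter> space M) = 0)"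

definition RN_iter :: "'a measure \<Rightarrow> ('a \<Rightarrow> 'a) \<Rightarrow> nat \<Rightarrow> 'a \<Rightarrow> ennreal" where
  "RN_iter M \<Psi> m = RN_deriv M (distr M M (\<Psi> ^^ m))"

definition E_set :: "'a measure \<Rightarrow> ('a \<Rightarrow> 'a) \<Rightarrow> nat \<Rightarrow> 'a set" where
  "E_set M \<Psi> m = {x \<in> space M. RN_iter M \<Psi> m x = 0}"

text \<open>kernel of \<open>C_\<Psi>^m\<close> on \<open>L_{(\<phi>,w)}\<close> (elements identified up to a.e. equality)\<close>
definition comp_kernel :: "(real \<Rightarrow> real) \<Rightarrow> (real \<Rightarrow> real) \<Rightarrow> 'a measure \<Rightarrow> ('a \<Rightarrow> 'a) \<Rightarrow> nat \<Rightarrow> ('a \<Rightarrow> complex) set" where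
  "comp_kernel \<phi> w M \<Psi> m = {f. in_OL \<phi> w M f \<and> (AE x in M. f ((\<Psi> ^^ m) x) = 0)}"

definition OL_on :: "(real \<Rightarrow> real) \<Rightarrow> (real \<Rightarrow> real) \<Rightarrow> 'a measure \<Rightarrow> 'a set \<Rightarrow> ('a \<Rightarrow> complex) set" where
  "OL_on \<phi> w M A = {f. in_OL \<phi> w M f \<and> (AE x in M. x \<notin> A \<longrightarrow> f x = 0)}"

end

theory Submission
  imports Defs
begin

lemma measurable_funpow: "f \<in> M \<rightarrow>\<^sub>M M \<Longrightarrow> f ^^ n \<in> M \<rightarrow>\<^sub>M M"
  by (induction n) (auto simp del: funpow.simps simp: funpow_Suc_right intro: measurable_comp)

lemma nonsingular_funpow:
  assumes f: "f \<in> M \<rightarrow>\<^sub>M M" and "nonsingular M f"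
  shows "nonsingular M (f ^^ n)"
proof (induction n)
  case 0
  then show ?case by (simp add: nonsingular_def Int_absorb2 sets.sets_into_space)
next
  case (Suc n)
  show ?case
    unfolding nonsingular_def
  proof (intro ballI impI)
    fix S assume S: "S \<in> sets M" "emeasure M S = 0"
    define T where "T = (f ^^ n) -` S \<inter> space M"
    have "T \<in> sets M"
      unfolding T_def using measurable_funpow[OF f] S(1) by (rule measurable_sets)
    moreover have "emeasure M T = 0"
      using Suc S unfolding T_def nonsingular_def by blast
    moreover have "(f ^^ Suc n) -` S \<inter> space M = f -` T \<inter> space M"
      unfolding T_def using measurable_space[OF f] by (auto simp: funpow_swap1)
    ultimately show "emeasure M ((f ^^ Suc n) -` S \<inter> space M) = 0"
      using \<open>nonsingular M f\<close> unfolding nonsingular_def by auto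
  qed
qed

lemma absolutely_continuous_distr_nonsingular:
  assumes "f \<in> M \<rightarrow>\<^sub>M M" and "nonsingular M f"
  shows "absolutely_continuous M (distr M M f)"
  using assms unfolding absolutely_continuous_def nonsingular_def
  by (auto simp: null_sets_def emeasure_distr)

lemma AE_comp_iff_AE_RN_deriv:
  assumes "sigma_finite_measure N"
    and g: "g \<in> M \<rightarrow>\<^sub>M N" and ac: "absolutely_continuous N (distr M N g)"
    and P: "{y \<in> space N. P y} \<in> sets N"
  shows "(AE x in M. P (g x)) \<longleftrightarrow> (AE y in N. RN_deriv N (distr M N g) y \<noteq> 0 \<longrightarrow> P y)"
proof -
  interpret sigma_finite_measure N by fact
  have "(AE x in M. P (g x)) \<longleftrightarrow> (AE y in distr M N g. P y)"
    using AE_distr_iff[OF g P] by simp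
  also have "\<dots> \<longleftrightarrow> (AE y in density N (RN_deriv N (distr M N g)). P y)"
    using density_RN_deriv[OF ac] by (metis sets_distr)
  also have "\<dots> \<longleftrightarrow> (AE y in N. RN_deriv N (distr M N g) y \<noteq> 0 \<longrightarrow> P y)"
    by (simp add: AE_density zero_less_iff_neq_zero)
  finally show ?thesis .
qed

lemma AE_funpow_zero_iff_AE_outside_E_set:
  fixes f :: "'a \<Rightarrow> complex"
  assumes "sigma_finite_measure M" and \<Psi>: "\<Psi> \<in> M \<rightarrow>\<^sub>M M" and "nonsingular M \<Psi>"
    and f: "f \<in> borel_measurable M"
  shows "(AE x in M. f ((\<Psi> ^^ m) x) = 0) \<longleftrightarrow> (AE x in M. x \<notin> E_set M \<Psi> m \<longrightarrow> f x = 0)"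
proof -
  have "{x \<in> space M. f x = 0} \<in> sets M"
    using f by measurable
  with assms have "(AE x in M. f ((\<Psi> ^^ m) x) = 0) \<longleftrightarrow>
      (AE x in M. RN_iter M \<Psi> m x \<noteq> 0 \<longrightarrow> f x = 0)"
    unfolding RN_iter_def
    by (intro AE_comp_iff_AE_RN_deriv measurable_funpow
        absolutely_continuous_distr_nonsingular nonsingular_funpow)
  also have "\<dots> \<longleftrightarrow> (AE x in M. x \<notin> E_set M \<Psi> m \<longrightarrow> f x = 0)"
    unfolding E_set_def by (intro AE_cong) auto
  finally show ?thesis .
qed

theorem theorem3p1:
  fixes M :: "'a measure" and \<phi> w :: "real \<Rightarrow> real" and \<Psi> :: "'a \<Rightarrow> 'a" and m :: nat
  assumes "sigma_finite_measure M"
    and "young_function \<phi>" and "delta2 \<phi>"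
    and "weight_function w"
    and "\<Psi> \<in> M \<rightarrow>\<^sub>M M" and "nonsingular M \<Psi>"
    and "\<forall>f. in_OL \<phi> w M f \<longrightarrow> in_OL \<phi> w M (f \<circ> \<Psi>)"
  shows "comp_kernel \<phi> w M \<Psi> m = OL_on \<phi> w M (E_set M \<Psi> m)"
  using AE_funpow_zero_iff_AE_outside_E_set[OF assms(1,5,6)]
  unfolding comp_kernel_def OL_on_def in_OL_def by blast

end
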